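(* Let $(A,\Delta)$ be a graded connected coalgebra, $1_A$ the unique element of $A_0$ with $\varepsilon(1_A)=1$, and $\lambda:A\to\mathbb{K}$ a linear form with $\lambda(1_A)=1$. (1) There exists a unique coalgebra morphism $\psi:(A,\Delta)\to(\mathbb{K}[X],\Delta)$ such that $\varepsilon'\circ\psi=\lambda$. (2) If $(A,m,\Delta)$ is a bialgebra, then $\psi$ is a bialgebra morphism $(A,m,\Delta)\to(\mathbb{K}[X],m,\Delta)$ if and only if $\lambda$ is a character of $A$. (3) If $(A,m,\Delta,\delta)$ is a bialgebra in cointeraction, then $\psi$ is a morphism of bialgebras in cointeraction $(A,m,\Delta,\delta)\to(\mathbb{K}[X],m,\Delta,\delta)$ if and only if $\lambda$ is the counit $\varepsilon'$ of $(A,m,\delta)$.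
   Context: Work over a field $\mathbb{K}$ of characteristic zero. A graded connected coalgebra is a coalgebra $A=\bigoplus_{n\ge0}A_n$ with $\Delta(A_n)\subseteq\bigoplus_{i+j=n}A_i\otimes A_j$ and $A_0$ one-dimensional. On $\mathbb{K}[X]$: usual product $m$; coproducts $\Delta(X)=X\otimes1+1\otimes X$ and $\delta(X)=X\otimes X$, extended multiplicatively (so $\Delta(P)(X,Y)=P(X+Y)$, $\delta(P)(X,Y)=P(XY)$); counit of $\Delta$ is $P\mapsto P(0)$, counit of $\delta$ is $\varepsilon'(P)=P(1)$. A character of an algebra is an algebra morphism to $\mathbb{K}$. A bialgebra in cointeraction is $(A,m,\Delta,\delta)$ where $(A,m,\Delta)$ and $(A,m,\delta)$ are bialgebras and $(\Delta\otimes Id)\circ\delta=m_{1,3,24}\circ(\delta\otimes\delta)\circ\Delta$, with $m_{1,3,24}(a\otimes b\otimes c\otimes d)=a\otimes c\otimes bd$; a morphism of such is a linear map that is a bialgebra morphism for both structures. In (3), $A$ is as in the hypothesis (graded connected for $\Delta$). *)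

theory Defs
  imports Main "HOL-Computational_Algebra.Polynomial"
begin

text \<open>Since Isabelle/HOL
  has no tensor products, an element of V (x) W is represented by a finite list
  of pairs [(x1,y1),...,(xn,yn)] standing for the sum of the xi (x) yi.
  Two such lists represent the same tensor iff all functionals f (x) g
  (f, g linear forms) take the same value on them; over a field this is exactly
  equality in V (x) W.\<close>

definition tensor_eq ::
  "('k::field \<Rightarrow> 'a::ab_group_add \<Rightarrow> 'a) \<Rightarrow> ('k \<Rightarrow> 'b::ab_group_add \<Rightarrow> 'b)
   \<Rightarrow> ('a \<times> 'b) list \<Rightarrow> ('a \<times> 'b) list \<Rightarrow> bool" where
  "tensor_eq s1 s2 L M \<longleftrightarrow>
     (\<forall>f g. Vector_Spaces.linear s1 (*) f \<longrightarrow> Vector_Spaces.linear s2 (*) g \<longrightarrow>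
        (\<Sum>(x,y)\<leftarrow>L. f x * g y) = (\<Sum>(x,y)\<leftarrow>M. f x * g y))"

definition tensor3_eq ::
  "('k::field \<Rightarrow> 'a::ab_group_add \<Rightarrow> 'a)
   \<Rightarrow> ('a \<times> 'a \<times> 'a) list \<Rightarrow> ('a \<times> 'a \<times> 'a) list \<Rightarrow> bool" where
  "tensor3_eq s L M \<longleftrightarrow>
     (\<forall>f g h. Vector_Spaces.linear s (*) f \<longrightarrow> Vector_Spaces.linear s (*) g \<longrightarrow>
        Vector_Spaces.linear s (*) h \<longrightarrow>
        (\<Sum>(x,y,z)\<leftarrow>L. f x * g y * h z) = (\<Sum>(x,y,z)\<leftarrow>M. f x * g y * h z))"

definition coalgebra ::
  "('k::field \<Rightarrow> 'a::ab_group_add \<Rightarrow> 'a) \<Rightarrow> ('a \<Rightarrow> ('a \<times> 'a) list) \<Rightarrow> ('a \<Rightarrow> 'k) \<Rightarrow> bool" where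
  "coalgebra s D e \<longleftrightarrow>
     vector_space s \<and>
     Vector_Spaces.linear s (*) e \<and>
     (\<forall>a b. tensor_eq s s (D (a + b)) (D a @ D b)) \<and>
     (\<forall>c a. tensor_eq s s (D (s c a)) (map (\<lambda>(x,y). (s c x, y)) (D a))) \<and>
     (\<forall>a. tensor3_eq s
            (concat (map (\<lambda>(x,y). map (\<lambda>(u,v). (u,v,y)) (D x)) (D a)))
            (concat (map (\<lambda>(x,y). map (\<lambda>(u,v). (x,u,v)) (D y)) (D a)))) \<and>
     (\<forall>a. (\<Sum>(x,y)\<leftarrow>D a. s (e x) y) = a) \<and>
     (\<forall>a. (\<Sum>(x,y)\<leftarrow>D a. s (e y) x) = a)"

definition graded_connected_coalgebra ::
  "('k::field \<Rightarrow> 'a::ab_group_add \<Rightarrow> 'a) \<Rightarrow> ('a \<Rightarrow> ('a \<times> 'a) list) \<Rightarrow> ('a \<Rightarrow> 'k)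
   \<Rightarrow> (nat \<Rightarrow> 'a set) \<Rightarrow> bool" where
  "graded_connected_coalgebra s D e G \<longleftrightarrow>
     coalgebra s D e \<and>
     (\<forall>n. module.subspace s (G n)) \<and>
     (\<forall>a. \<exists>!c :: nat \<Rightarrow> 'a. (\<forall>n. c n \<in> G n) \<and> finite {n. c n \<noteq> 0} \<and>
              a = (\<Sum>n\<in>{n. c n \<noteq> 0}. c n)) \<and>
     (\<forall>n. \<forall>a\<in>G n. \<exists>L. tensor_eq s s (D a) L \<and>
              (\<forall>(x,y)\<in>set L. \<exists>i j. i + j = n \<and> x \<in> G i \<and> y \<in> G j)) \<and>
     (\<exists>z. z \<noteq> 0 \<and> G 0 = module.span s {z})"

definition bialgebra ::
  "('k::field \<Rightarrow> 'a::ab_group_add \<Rightarrow> 'a) \<Rightarrow> ('a \<Rightarrow> 'a \<Rightarrow> 'a) \<Rightarrow> 'a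
   \<Rightarrow> ('a \<Rightarrow> ('a \<times> 'a) list) \<Rightarrow> ('a \<Rightarrow> 'k) \<Rightarrow> bool" where
  "bialgebra s m one D e \<longleftrightarrow>
     coalgebra s D e \<and>
     (\<forall>a b c. m (a + b) c = m a c + m b c) \<and>
     (\<forall>a b c. m a (b + c) = m a b + m a c) \<and>
     (\<forall>k a b. m (s k a) b = s k (m a b)) \<and>
     (\<forall>k a b. m a (s k b) = s k (m a b)) \<and>
     (\<forall>a b c. m (m a b) c = m a (m b c)) \<and>
     (\<forall>a. m one a = a \<and> m a one = a) \<and>
     (\<forall>a b. tensor_eq s s (D (m a b))
              (concat (map (\<lambda>(x,y). map (\<lambda>(x',y'). (m x x', m y y')) (D b)) (D a)))) \<and>
     tensor_eq s s (D one) [(one, one)] \<and>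
     (\<forall>a b. e (m a b) = e a * e b) \<and>
     e one = 1"

definition cointeraction ::
  "('k::field \<Rightarrow> 'a::ab_group_add \<Rightarrow> 'a) \<Rightarrow> ('a \<Rightarrow> 'a \<Rightarrow> 'a) \<Rightarrow> 'a
   \<Rightarrow> ('a \<Rightarrow> ('a \<times> 'a) list) \<Rightarrow> ('a \<Rightarrow> 'k)
   \<Rightarrow> ('a \<Rightarrow> ('a \<times> 'a) list) \<Rightarrow> ('a \<Rightarrow> 'k) \<Rightarrow> bool" where
  "cointeraction s m one D e d e' \<longleftrightarrow>
     bialgebra s m one D e \<and> bialgebra s m one d e' \<and>
     (\<forall>a. tensor3_eq s
        (concat (map (\<lambda>(x,y). map (\<lambda>(u,v). (u,v,y)) (D x)) (d a)))
        (concat (map (\<lambda>(x,y). concat (map (\<lambda>(x1,x2). map (\<lambda>(y1,y2). (x1, y1, m x2 y2)) (d y)) (d x)))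
                   (D a))))"

definition coalgebra_morphism ::
  "('k::field \<Rightarrow> 'a::ab_group_add \<Rightarrow> 'a) \<Rightarrow> ('a \<Rightarrow> ('a \<times> 'a) list) \<Rightarrow> ('a \<Rightarrow> 'k)
   \<Rightarrow> ('k \<Rightarrow> 'b::ab_group_add \<Rightarrow> 'b) \<Rightarrow> ('b \<Rightarrow> ('b \<times> 'b) list) \<Rightarrow> ('b \<Rightarrow> 'k)
   \<Rightarrow> ('a \<Rightarrow> 'b) \<Rightarrow> bool" where
  "coalgebra_morphism s D e s' D' e' f \<longleftrightarrow>
     Vector_Spaces.linear s s' f \<and>
     (\<forall>a. tensor_eq s' s' (map (\<lambda>(x,y). (f x, f y)) (D a)) (D' (f a))) \<and>
     (\<forall>a. e' (f a) = e a)"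

definition algebra_morphism ::
  "('a \<Rightarrow> 'a \<Rightarrow> 'a) \<Rightarrow> 'a \<Rightarrow> ('b \<Rightarrow> 'b \<Rightarrow> 'b) \<Rightarrow> 'b \<Rightarrow> ('a \<Rightarrow> 'b) \<Rightarrow> bool" where
  "algebra_morphism m one m' one' f \<longleftrightarrow>
     (\<forall>a b. f (m a b) = m' (f a) (f b)) \<and> f one = one'"

definition bialgebra_morphism ::
  "('k::field \<Rightarrow> 'a::ab_group_add \<Rightarrow> 'a) \<Rightarrow> ('a \<Rightarrow> 'a \<Rightarrow> 'a) \<Rightarrow> 'a
   \<Rightarrow> ('a \<Rightarrow> ('a \<times> 'a) list) \<Rightarrow> ('a \<Rightarrow> 'k)
   \<Rightarrow> ('k \<Rightarrow> 'b::ab_group_add \<Rightarrow> 'b) \<Rightarrow> ('b \<Rightarrow> 'b \<Rightarrow> 'b) \<Rightarrow> 'b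
   \<Rightarrow> ('b \<Rightarrow> ('b \<times> 'b) list) \<Rightarrow> ('b \<Rightarrow> 'k) \<Rightarrow> ('a \<Rightarrow> 'b) \<Rightarrow> bool" where
  "bialgebra_morphism s m one D e s' m' one' D' e' f \<longleftrightarrow>
     coalgebra_morphism s D e s' D' e' f \<and> algebra_morphism m one m' one' f"

definition character ::
  "('k::field \<Rightarrow> 'a::ab_group_add \<Rightarrow> 'a) \<Rightarrow> ('a \<Rightarrow> 'a \<Rightarrow> 'a) \<Rightarrow> 'a \<Rightarrow> ('a \<Rightarrow> 'k) \<Rightarrow> bool" where
  "character s m one l \<longleftrightarrow>
     Vector_Spaces.linear s (*) l \<and> algebra_morphism m one (*) 1 l"

text \<open>Structures on K[X].  polyDelta P represents P(X+Y) = sum_n p_n sum_k (n choose k) X^k Y^(n-k),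
  polydelta P represents P(XY) = sum_n p_n X^n Y^n.\<close>
definition polyDelta :: "'k::field poly \<Rightarrow> ('k poly \<times> 'k poly) list" where
  "polyDelta P = concat (map (\<lambda>n. map (\<lambda>k. (monom (coeff P n * of_nat (n choose k)) k, monom 1 (n - k)))
                                       [0..<Suc n]) [0..<Suc (degree P)])"

definition polydelta :: "'k::field poly \<Rightarrow> ('k poly \<times> 'k poly) list" where
  "polydelta P = map (\<lambda>n. (monom (coeff P n) n, monom 1 n)) [0..<Suc (degree P)]"

definition polyeps :: "'k::field poly \<Rightarrow> 'k" where
  "polyeps P = poly P 0"

definition polyeps' :: "'k::field poly \<Rightarrow> 'k" where
  "polyeps' P = poly P 1"

end

theory Submission
  imports Defs "HOL-Computational_Algebra.Formal_Power_Series"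
begin

text \<open>
  If \<open>\<psi>\<close> is a coalgebra morphism into \<open>(\<bbbK>[X], \<Delta>)\<close> with \<open>\<epsilon>' \<circ> \<psi> = \<lambda>\<close>, then
  \<open>\<Delta>(P)(X, Y) = P(X + Y)\<close> and \<open>n = 1 + \<dots> + 1\<close> give \<open>\<psi>(a)(n) = \<lambda>\<^sup>*\<^sup>n(a)\<close> for every natural
  \<open>n\<close>, where \<open>\<lambda>\<^sup>*\<^sup>n\<close> is the \<open>n\<close>-th convolution power. In characteristic zero a polynomial is
  determined by its values at the naturals, so \<open>\<psi>\<close> is unique. For existence write
  \<open>\<lambda> = \<epsilon> + \<nu>\<close>: in a graded connected coalgebra \<open>\<nu>\<close> vanishes on \<open>A\<^sub>0\<close>, so \<open>\<nu>\<^sup>*\<^sup>n\<close> vanishes on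
  \<open>A\<^sub>k\<close> for \<open>n > k\<close>, and \<open>\<psi>(a) = \<Sum>\<^sub>n \<nu>\<^sup>*\<^sup>n(a) (X choose n)\<close> is a coalgebra morphism by
  Vandermonde's identity.

  Evaluating at the naturals again, \<open>\<psi>\<close> is multiplicative iff all \<open>\<lambda>\<^sup>*\<^sup>n\<close> are, i.e. iff
  \<open>\<lambda>\<close> is a character (convolutions of characters being characters); and \<open>\<psi>\<close> respects
  \<open>\<delta>\<close>, which encodes \<open>P(XY)\<close>, iff the \<open>\<delta>\<close>-convolution of \<open>\<lambda>\<^sup>*\<^sup>k\<close> and \<open>\<lambda>\<^sup>*\<^sup>l\<close> is
  \<open>\<lambda>\<^sup>*\<^sup>k\<^sup>l\<close>, which the cointeraction identity yields by induction on \<open>k\<close> when \<open>\<lambda> = \<epsilon>'\<close>.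
  Identities in \<open>\<bbbK>[X] \<otimes> \<bbbK>[X]\<close> are checked by evaluation at the points of \<open>S \<times> S\<close>
  for an infinite \<open>S\<close>.
\<close>

lemmas linear_map_add = module_hom.add[OF module_hom_linearI]
  and linear_map_scale = module_hom.scale[OF module_hom_linearI]
  and linear_map_zero = module_hom.zero[OF module_hom_linearI]
  and linear_map_sum = module_hom.sum[OF module_hom_linearI]

lemma linear_map_sum_list:
  "Vector_Spaces.linear s1 s2 f \<Longrightarrow> f (\<Sum>x\<leftarrow>L. h x) = (\<Sum>x\<leftarrow>L. f (h x))"
  by (induct L) (simp_all add: linear_map_zero linear_map_add)

lemma vector_space_field: "vector_space ((*) :: 'k::field \<Rightarrow> 'k \<Rightarrow> 'k)"
  by unfold_locales (simp_all add: algebra_simps)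

lemma vector_space_poly: "vector_space (smult :: 'k::field \<Rightarrow> 'k poly \<Rightarrow> 'k poly)"
  by unfold_locales (simp_all add: smult_add_right smult_add_left)

lemma linear_poly_eval: "Vector_Spaces.linear smult (*) (\<lambda>p. poly p (s::'k::field))"
  by (simp add: Vector_Spaces.linear_iff vector_space_poly vector_space_field)

lemma linear_form_diff:
  "Vector_Spaces.linear s (*) f \<Longrightarrow> Vector_Spaces.linear s (*) g \<Longrightarrow>
   Vector_Spaces.linear s (*) (\<lambda>a. f a - g a)"
  by (simp add: Vector_Spaces.linear_iff algebra_simps)

lemma tensor_eqD:
  "tensor_eq s1 s2 L M \<Longrightarrow> Vector_Spaces.linear s1 (*) f \<Longrightarrow> Vector_Spaces.linear s2 (*) g \<Longrightarrow>
   (\<Sum>(x,y)\<leftarrow>L. f x * g y) = (\<Sum>(x,y)\<leftarrow>M. f x * g y)"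
  unfolding tensor_eq_def by blast

lemma tensor3_eqD:
  "tensor3_eq s L M \<Longrightarrow> Vector_Spaces.linear s (*) f \<Longrightarrow> Vector_Spaces.linear s (*) g \<Longrightarrow>
   Vector_Spaces.linear s (*) h \<Longrightarrow>
   (\<Sum>(x,y,z)\<leftarrow>L. f x * g y * h z) = (\<Sum>(x,y,z)\<leftarrow>M. f x * g y * h z)"
  unfolding tensor3_eq_def by blast

lemma sum_list_concat: "sum_list (concat xss) = (\<Sum>xs\<leftarrow>xss. sum_list xs)"
  by (induct xss) simp_all

lemma sum_list_times_sum_list:
  "(\<Sum>x\<leftarrow>xs. f x) * (\<Sum>y\<leftarrow>ys. g y) = (\<Sum>x\<leftarrow>xs. \<Sum>y\<leftarrow>ys. f x * (g y :: 'a::semiring_0))"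
  by (induct xs) (simp_all add: distrib_right sum_list_const_mult)

lemma sum_list_map_pair:
  "(\<Sum>(x,y)\<leftarrow>map (\<lambda>(x,y). (f x, f y)) L. g x y) = (\<Sum>(x,y)\<leftarrow>L. g (f x) (f y))"
  by (induct L) auto

lemma sum_list_sum_swap:
  "(\<Sum>x\<leftarrow>xs. \<Sum>i\<in>A. f x i) = (\<Sum>i\<in>A. \<Sum>x\<leftarrow>xs. f x i)"
  by (induct xs) (simp_all add: sum.distrib)

section \<open>Convolution of linear forms\<close>

definition convolution :: "('a \<Rightarrow> ('a \<times> 'a) list) \<Rightarrow> ('a \<Rightarrow> 'k::field) \<Rightarrow> ('a \<Rightarrow> 'k) \<Rightarrow> 'a \<Rightarrow> 'k" where
  "convolution D f g a = (\<Sum>(x,y)\<leftarrow>D a. f x * g y)"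

primrec conv_power :: "('a \<Rightarrow> ('a \<times> 'a) list) \<Rightarrow> ('a \<Rightarrow> 'k::field) \<Rightarrow> ('a \<Rightarrow> 'k) \<Rightarrow> nat \<Rightarrow> 'a \<Rightarrow> 'k" where
  "conv_power D e f 0 = e"
| "conv_power D e f (Suc n) = convolution D f (conv_power D e f n)"

context
  fixes sc :: "'k::field \<Rightarrow> 'a::ab_group_add \<Rightarrow> 'a" and D e
  assumes co: "coalgebra sc D e"
begin

lemma coalgebra_linear_counit: "Vector_Spaces.linear sc (*) e"
  using co by (simp add: coalgebra_def)

lemma linear_convolution:
  assumes f: "Vector_Spaces.linear sc (*) f" and g: "Vector_Spaces.linear sc (*) g"
  shows "Vector_Spaces.linear sc (*) (convolution D f g)"
proof -
  have "convolution D f g (a + b) = convolution D f g a + convolution D f g b" for a b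
    using tensor_eqD[OF _ f g, of "D (a + b)" "D a @ D b"] co
    by (simp add: coalgebra_def convolution_def)
  moreover have "convolution D f g (sc c a) = c * convolution D f g a" for c a
    using tensor_eqD[OF _ f g, of "D (sc c a)" "map (\<lambda>(x,y). (sc c x, y)) (D a)"] co
    by (simp add: coalgebra_def convolution_def o_def split_def linear_map_scale[OF f]
        mult.assoc sum_list_const_mult)
  ultimately show ?thesis
    using co vector_space_field by (simp add: coalgebra_def Vector_Spaces.linear_iff)
qed

lemma convolution_counit_left:
  assumes f: "Vector_Spaces.linear sc (*) f"
  shows "convolution D e f = f"
proof
  fix a
  have "f a = f (\<Sum>(x,y)\<leftarrow>D a. sc (e x) y)" using co by (simp add: coalgebra_def)
  then show "convolution D e f a = f a"
    by (simp add: convolution_def linear_map_sum_list[OF f] split_def linear_map_scale[OF f])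
qed

lemma convolution_counit_right:
  assumes f: "Vector_Spaces.linear sc (*) f"
  shows "convolution D f e = f"
proof
  fix a
  have "f a = f (\<Sum>(x,y)\<leftarrow>D a. sc (e y) x)" using co by (simp add: coalgebra_def)
  then show "convolution D f e a = f a"
    by (simp add: convolution_def linear_map_sum_list[OF f] split_def linear_map_scale[OF f]
        mult.commute)
qed

lemma convolution_assoc:
  assumes f: "Vector_Spaces.linear sc (*) f" and g: "Vector_Spaces.linear sc (*) g"
    and h: "Vector_Spaces.linear sc (*) h"
  shows "convolution D (convolution D f g) h = convolution D f (convolution D g h)"
proof
  fix a
  let ?L = "concat (map (\<lambda>(x,y). map (\<lambda>(u,v). (u,v,y)) (D x)) (D a))"
    and ?R = "concat (map (\<lambda>(x,y). map (\<lambda>(u,v). (x,u,v)) (D y)) (D a))"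
  have "convolution D (convolution D f g) h a = (\<Sum>(x,y,z)\<leftarrow>?L. f x * g y * h z)"
    by (simp add: convolution_def map_concat sum_list_concat o_def split_def sum_list_mult_const)
  also have "\<dots> = (\<Sum>(x,y,z)\<leftarrow>?R. f x * g y * h z)"
    using co tensor3_eqD[OF _ f g h] by (simp add: coalgebra_def)
  also have "\<dots> = convolution D f (convolution D g h) a"
    by (simp add: convolution_def map_concat sum_list_concat o_def split_def sum_list_const_mult
        mult.assoc)
  finally show "convolution D (convolution D f g) h a = convolution D f (convolution D g h) a" .
qed

lemma linear_conv_power:
  "Vector_Spaces.linear sc (*) f \<Longrightarrow> Vector_Spaces.linear sc (*) (conv_power D e f n)"
  by (induct n) (simp_all add: coalgebra_linear_counit linear_convolution)

lemma conv_power_1: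
  "Vector_Spaces.linear sc (*) f \<Longrightarrow> conv_power D e f 1 = f"
  by (simp add: convolution_counit_right)

lemma conv_power_add:
  assumes f: "Vector_Spaces.linear sc (*) f"
  shows "conv_power D e f (i + j) = convolution D (conv_power D e f i) (conv_power D e f j)"
  by (induct i) (simp_all add: convolution_counit_left convolution_assoc f linear_conv_power)

end

section \<open>Tensors of polynomials\<close>

lemma poly_eq_0_if_infinite_roots:
  fixes p :: "'a::idom poly"
  assumes "infinite S" and "\<And>x. x \<in> S \<Longrightarrow> poly p x = 0"
  shows "p = 0"
  using assms poly_roots_finite finite_subset[of S "{x. poly p x = 0}"] by blast

lemma poly_eqI_of_nat:
  fixes p q :: "'k::field_char_0 poly"
  assumes "\<And>n. poly p (of_nat n) = poly q (of_nat n)"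
  shows "p = q"
proof -
  have "p - q = 0"
    by (rule poly_eq_0_if_infinite_roots[of "range of_nat"])
      (auto simp: assms infinite_UNIV_char_0 range_inj_infinite inj_of_nat)
  then show ?thesis by simp
qed

text \<open>\<open>\<bbbK>[X] \<otimes> \<bbbK>[X]\<close> is identified with \<open>\<bbbK>[X][Y]\<close> via \<open>x \<otimes> y \<mapsto> x(X) y(Y)\<close>.\<close>
definition bipoly_of_tensor :: "('k::comm_semiring_1 poly \<times> 'k poly) list \<Rightarrow> 'k poly poly" where
  "bipoly_of_tensor L = (\<Sum>(x,y)\<leftarrow>L. [:x:] * map_poly (\<lambda>c. [:c:]) y)"

lemma poly_poly_bipoly_of_tensor:
  "poly (poly (bipoly_of_tensor L) [:t:]) s = (\<Sum>(x,y)\<leftarrow>L. poly x s * poly y t)"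
proof -
  have "poly (map_poly (\<lambda>c. [:c:]) y) [:t:] = [:poly y t:]" for y :: "'a poly"
    by (induct y) (simp_all add: map_poly_pCons mult.commute)
  then show ?thesis
    unfolding bipoly_of_tensor_def by (induct L) (auto simp: mult.commute)
qed

lemma coeff_coeff_bipoly_of_tensor:
  "coeff (coeff (bipoly_of_tensor L) j) i = (\<Sum>(x,y)\<leftarrow>L. coeff x i * coeff y j)"
  unfolding bipoly_of_tensor_def by (induct L) (auto simp: coeff_map_poly mult.commute)

lemma linear_form_poly_expand:
  assumes f: "Vector_Spaces.linear smult (*) f" and "degree x \<le> N"
  shows "f x = (\<Sum>i\<le>N. coeff x i * f (monom 1 i))"
proof -
  have "f x = f (\<Sum>i\<le>N. smult (coeff x i) (monom 1 i))"
    using poly_as_sum_of_monoms'[OF \<open>degree x \<le> N\<close>] by (simp add: smult_monom)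
  then show ?thesis by (simp add: linear_map_sum[OF f] linear_map_scale[OF f])
qed

lemma tensor_pairing_bipoly_of_tensor:
  assumes f: "Vector_Spaces.linear smult (*) f" and g: "Vector_Spaces.linear smult (*) g"
    and deg: "\<And>x y. (x, y) \<in> set L \<Longrightarrow> degree x \<le> N \<and> degree y \<le> N"
  shows "(\<Sum>(x,y)\<leftarrow>L. f x * g y)
       = (\<Sum>i\<le>N. \<Sum>j\<le>N. coeff (coeff (bipoly_of_tensor L) j) i * f (monom 1 i) * g (monom 1 j))"
proof -
  have "(\<Sum>(x,y)\<leftarrow>L. f x * g y)
      = (\<Sum>(x,y)\<leftarrow>L. \<Sum>i\<le>N. \<Sum>j\<le>N. coeff x i * coeff y j * f (monom 1 i) * g (monom 1 j))"
    by (rule arg_cong[where f = sum_list], rule map_cong[OF refl])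
      (auto dest!: deg simp: linear_form_poly_expand[OF f] linear_form_poly_expand[OF g]
        sum_product algebra_simps)
  then show ?thesis
    by (simp add: split_def sum_list_sum_swap sum_list_mult_const coeff_coeff_bipoly_of_tensor)
qed

lemma tensor_eq_polyI:
  fixes L M :: "('k::field poly \<times> 'k poly) list"
  assumes "infinite S"
    and eval: "\<And>s t. s \<in> S \<Longrightarrow> t \<in> S \<Longrightarrow>
      (\<Sum>(x,y)\<leftarrow>L. poly x s * poly y t) = (\<Sum>(x,y)\<leftarrow>M. poly x s * poly y t)"
  shows "tensor_eq smult smult L M"
proof -
  define Q where "Q = bipoly_of_tensor L - bipoly_of_tensor M"
  have "poly Q [:t:] = 0" if "t \<in> S" for t
    using \<open>infinite S\<close>
    by (rule poly_eq_0_if_infinite_roots) (simp add: Q_def poly_poly_bipoly_of_tensor eval that)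
  then have "Q = 0"
    using \<open>infinite S\<close> by (intro poly_eq_0_if_infinite_roots[of "(\<lambda>t. [:t:]) ` S"])
      (auto simp: finite_image_iff inj_on_def)
  then have same_bipoly: "bipoly_of_tensor L = bipoly_of_tensor M" by (simp add: Q_def)
  define N where "N = (\<Sum>(x,y)\<leftarrow>L @ M. degree x + degree y)"
  have deg: "degree x \<le> N \<and> degree y \<le> N" if "(x, y) \<in> set (L @ M)" for x y
  proof -
    have "degree x + degree y \<le> N"
      unfolding N_def using that by (intro member_le_sum_list) force+
    then show ?thesis by simp
  qed
  show ?thesis
    unfolding tensor_eq_def
  proof (intro allI impI)
    fix f g :: "'k poly \<Rightarrow> 'k"
    assume f: "Vector_Spaces.linear smult (*) f" and g: "Vector_Spaces.linear smult (*) g"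
    have "(\<Sum>(x,y)\<leftarrow>L. f x * g y)
        = (\<Sum>i\<le>N. \<Sum>j\<le>N. coeff (coeff (bipoly_of_tensor M) j) i * f (monom 1 i) * g (monom 1 j))"
      unfolding same_bipoly[symmetric] by (rule tensor_pairing_bipoly_of_tensor[OF f g]) (rule deg, simp)
    also have "\<dots> = (\<Sum>(x,y)\<leftarrow>M. f x * g y)"
      by (rule tensor_pairing_bipoly_of_tensor[OF f g, symmetric]) (rule deg, simp)
    finally show "(\<Sum>(x,y)\<leftarrow>L. f x * g y) = (\<Sum>(x,y)\<leftarrow>M. f x * g y)" .
  qed
qed

lemma sum_list_upt_Suc: "(\<Sum>i\<leftarrow>[0..<Suc n]. f i) = (\<Sum>i\<le>n. f i)"
  by (simp only: interv_sum_list_conv_sum_set_nat set_upt atLeast0LessThan lessThan_Suc_atMost)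

lemma polyDelta_eval:
  "(\<Sum>(x,y)\<leftarrow>polyDelta P. poly x s * poly y t) = poly P (s + t)"
proof -
  have "(\<Sum>(x,y)\<leftarrow>polyDelta P. poly x s * poly y t) =
        (\<Sum>n\<le>degree P. \<Sum>k\<le>n. coeff P n * (of_nat (n choose k) * s ^ k * t ^ (n - k)))"
    by (simp add: polyDelta_def map_concat sum_list_concat o_def sum_list_upt_Suc poly_monom
        mult.assoc del: upt_Suc)
  also have "\<dots> = (\<Sum>n\<le>degree P. coeff P n * (s + t) ^ n)"
    by (simp add: binomial_ring sum_distrib_left)
  finally show ?thesis by (simp add: poly_altdef)
qed

lemma polydelta_eval:
  "(\<Sum>(x,y)\<leftarrow>polydelta P. poly x s * poly y t) = poly P (s * t)"
proof -
  have "(\<Sum>(x,y)\<leftarrow>polydelta P. poly x s * poly y t) = (\<Sum>n\<le>degree P. coeff P n * (s * t) ^ n)"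
    by (simp add: polydelta_def o_def sum_list_upt_Suc poly_monom power_mult_distrib mult.assoc
        del: upt_Suc)
  then show ?thesis by (simp add: poly_altdef)
qed

section \<open>Coalgebra morphisms into the polynomial coalgebra\<close>

lemma coalgebra_morphism_poly_of_nat:
  assumes mor: "coalgebra_morphism sc D e smult polyDelta polyeps \<psi>"
    and ev: "polyeps' \<circ> \<psi> = lam"
  shows "poly (\<psi> a) (of_nat n) = conv_power D e lam n a"
proof (induct n arbitrary: a)
  case 0
  then show ?case using mor by (simp add: coalgebra_morphism_def polyeps_def)
next
  case (Suc n)
  have "tensor_eq smult smult (map (\<lambda>(x,y). (\<psi> x, \<psi> y)) (D a)) (polyDelta (\<psi> a))"
    using mor by (simp add: coalgebra_morphism_def)
  from tensor_eqD[OF this linear_poly_eval linear_poly_eval, of 1 "of_nat n"]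
  have "poly (\<psi> a) (1 + of_nat n) = (\<Sum>(x,y)\<leftarrow>D a. poly (\<psi> x) 1 * poly (\<psi> y) (of_nat n))"
    by (simp add: polyDelta_eval[symmetric] o_def split_def)
  then show ?case
    using ev by (simp add: Suc convolution_def polyeps'_def fun_eq_iff)
qed

lemma coalgebra_morphism_to_poly_unique:
  fixes \<psi>1 \<psi>2 :: "'a::ab_group_add \<Rightarrow> 'k::field_char_0 poly"
  assumes "coalgebra_morphism sc D e smult polyDelta polyeps \<psi>1" and "polyeps' \<circ> \<psi>1 = lam"
    and "coalgebra_morphism sc D e smult polyDelta polyeps \<psi>2" and "polyeps' \<circ> \<psi>2 = lam"
  shows "\<psi>1 = \<psi>2"
  using assms by (auto intro!: poly_eqI_of_nat simp: coalgebra_morphism_poly_of_nat)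

lemma coalgebra_morphism_linear_eval:
  assumes "coalgebra_morphism sc D e smult polyDelta polyeps \<psi>" and "polyeps' \<circ> \<psi> = lam"
  shows "Vector_Spaces.linear sc (*) lam"
proof -
  have "Vector_Spaces.linear sc (*) ((\<lambda>p. poly p 1) \<circ> \<psi>)"
    using assms(1) linear_poly_eval
    by (auto simp: coalgebra_morphism_def intro: Vector_Spaces.linear_compose)
  then show ?thesis using assms(2) by (simp add: polyeps'_def o_def)
qed

section \<open>Newton polynomials\<close>

definition binomial_poly :: "nat \<Rightarrow> 'k::field_char_0 poly" where
  "binomial_poly n = smult (inverse (fact n)) (\<Prod>i<n. [:- of_nat i, 1:])"

lemma poly_binomial_poly: "poly (binomial_poly n) s = s gchoose n"
proof -
  have "s gchoose n = (\<Prod>i = 0..<n. s - of_nat i) / fact n"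
    using gbinomial_mult_fact'[of s n] by (simp add: field_simps)
  then show ?thesis by (simp add: binomial_poly_def poly_prod atLeast0LessThan field_simps)
qed

definition locally_nilpotent :: "('a \<Rightarrow> ('a \<times> 'a) list) \<Rightarrow> ('a \<Rightarrow> 'k::field) \<Rightarrow> ('a \<Rightarrow> 'k) \<Rightarrow> bool" where
  "locally_nilpotent D e \<nu> \<longleftrightarrow> (\<forall>a. \<exists>N. \<forall>n\<ge>N. conv_power D e \<nu> n a = 0)"

lemma locally_nilpotent_common_bound:
  assumes "locally_nilpotent D e \<nu>" and "finite X"
  shows "\<exists>N. \<forall>x\<in>X. \<forall>n\<ge>N. conv_power D e \<nu> n x = 0"
  using \<open>finite X\<close>
proof induct
  case (insert x X)
  then obtain N where N: "\<forall>y\<in>X. \<forall>n\<ge>N. conv_power D e \<nu> n y = 0" by blast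
  obtain M where M: "\<forall>n\<ge>M. conv_power D e \<nu> n x = 0"
    using assms(1) by (auto simp: locally_nilpotent_def)
  show ?case using N M by (intro exI[of _ "max N M"]) auto
qed simp

text \<open>Newton's forward-difference formula: for \<open>\<lambda> = e + \<nu>\<close>, \<open>\<nu>\<^sup>*\<^sup>n(a)\<close> is the \<open>n\<close>-th
  difference at \<open>0\<close> of the sequence \<open>k \<mapsto> \<lambda>\<^sup>*\<^sup>k(a)\<close>.\<close>
definition newton_poly :: "('a \<Rightarrow> ('a \<times> 'a) list) \<Rightarrow> ('a \<Rightarrow> 'k::field_char_0) \<Rightarrow> ('a \<Rightarrow> 'k) \<Rightarrow> 'a \<Rightarrow> 'k poly" where
  "newton_poly D e \<nu> a =
     (\<Sum>n | conv_power D e \<nu> n a \<noteq> 0. smult (conv_power D e \<nu> n a) (binomial_poly n))"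

lemma poly_newton_poly:
  assumes "\<forall>n\<ge>N. conv_power D e \<nu> n a = 0"
  shows "poly (newton_poly D e \<nu> a) s = (\<Sum>n<N. conv_power D e \<nu> n a * (s gchoose n))"
proof -
  have support: "{n. conv_power D e \<nu> n a \<noteq> 0} \<subseteq> {..<N}"
    using assms not_less by blast
  have "poly (newton_poly D e \<nu> a) s
      = (\<Sum>n | conv_power D e \<nu> n a \<noteq> 0. conv_power D e \<nu> n a * (s gchoose n))"
    by (simp add: newton_poly_def poly_sum poly_binomial_poly)
  also have "\<dots> = (\<Sum>n<N. conv_power D e \<nu> n a * (s gchoose n))"
    using support by (intro sum.mono_neutral_left) auto
  finally show ?thesis .
qed

lemma gbinomial_Vandermonde_truncated:
  fixes c :: "nat \<Rightarrow> 'a::field_char_0"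
  assumes "\<forall>n\<ge>N. c n = 0"
  shows "(\<Sum>i<N. \<Sum>k<N. c (i + k) * ((s gchoose i) * (t gchoose k)))
       = (\<Sum>n<N. c n * ((s + t) gchoose n))"
proof -
  have support: "c n \<noteq> 0 \<Longrightarrow> n < N" for n
    using assms not_less by blast
  have "(\<Sum>i<N. \<Sum>k<N. c (i + k) * ((s gchoose i) * (t gchoose k)))
      = (\<Sum>(i,k)\<in>{(i,k). i + k < N}. c (i + k) * ((s gchoose i) * (t gchoose k)))"
    unfolding sum.cartesian_product by (rule sum.mono_neutral_right) (auto dest: support)
  also have "\<dots> = (\<Sum>n<N. \<Sum>i\<le>n. c n * ((s gchoose i) * (t gchoose (n - i))))"
    by (subst sum.triangle_reindex) simp
  also have "\<dots> = (\<Sum>n<N. c n * ((s + t) gchoose n))"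
    by (simp add: gbinomial_Vandermonde[symmetric] sum_distrib_left atMost_atLeast0)
  finally show ?thesis .
qed

context
  fixes sc :: "'k::field_char_0 \<Rightarrow> 'a::ab_group_add \<Rightarrow> 'a" and D e \<nu>
  assumes co: "coalgebra sc D e"
    and lin: "Vector_Spaces.linear sc (*) \<nu>"
    and nil: "locally_nilpotent D e \<nu>"
begin

lemma linear_newton_poly: "Vector_Spaces.linear sc smult (newton_poly D e \<nu>)"
proof -
  note lin_power = linear_conv_power[OF co lin]
  have "newton_poly D e \<nu> (a + b) = newton_poly D e \<nu> a + newton_poly D e \<nu> b" for a b
  proof -
    obtain N where "\<forall>x\<in>{a, b, a + b}. \<forall>n\<ge>N. conv_power D e \<nu> n x = 0"
      using locally_nilpotent_common_bound[OF nil, of "{a, b, a + b}"] by auto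
    then have "\<forall>n\<ge>N. conv_power D e \<nu> n a = 0" "\<forall>n\<ge>N. conv_power D e \<nu> n b = 0"
      "\<forall>n\<ge>N. conv_power D e \<nu> n (a + b) = 0" by simp_all
    from this[THEN poly_newton_poly] show ?thesis
      by (intro poly_ext) (simp add: linear_map_add[OF lin_power] sum.distrib distrib_right)
  qed
  moreover have "newton_poly D e \<nu> (sc c a) = smult c (newton_poly D e \<nu> a)" for c a
  proof -
    obtain N where "\<forall>x\<in>{a, sc c a}. \<forall>n\<ge>N. conv_power D e \<nu> n x = 0"
      using locally_nilpotent_common_bound[OF nil, of "{a, sc c a}"] by auto
    then have "\<forall>n\<ge>N. conv_power D e \<nu> n a = 0" "\<forall>n\<ge>N. conv_power D e \<nu> n (sc c a) = 0"
      by simp_all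
    from this[THEN poly_newton_poly] show ?thesis
      by (intro poly_ext) (simp add: linear_map_scale[OF lin_power] sum_distrib_left mult.assoc)
  qed
  ultimately show ?thesis
    using co vector_space_poly by (simp add: coalgebra_def Vector_Spaces.linear_iff)
qed

lemma newton_poly_counit: "polyeps (newton_poly D e \<nu> a) = e a"
proof -
  obtain N where "\<forall>n\<ge>N. conv_power D e \<nu> n a = 0"
    using nil by (auto simp: locally_nilpotent_def)
  then have "\<forall>n\<ge>Suc N. conv_power D e \<nu> n a = 0" by auto
  from poly_newton_poly[OF this] show ?thesis
    by (simp add: polyeps_def sum.lessThan_Suc_shift gbinomial_0_left del: sum.lessThan_Suc)
qed

lemma newton_poly_eval_1: "polyeps' (newton_poly D e \<nu> a) = e a + \<nu> a"
proof -
  obtain N where "\<forall>n\<ge>N. conv_power D e \<nu> n a = 0"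
    using nil by (auto simp: locally_nilpotent_def)
  then have "\<forall>n\<ge>Suc (Suc N). conv_power D e \<nu> n a = 0" by auto
  moreover have "(1::'k) gchoose Suc (Suc i) = 0" for i
    using binomial_gbinomial[of 1 "Suc (Suc i)", where 'a = 'k] by simp
  ultimately show ?thesis
    by (simp add: polyeps'_def poly_newton_poly sum.lessThan_Suc_shift
        convolution_counit_right[OF co lin] del: sum.lessThan_Suc)
qed

lemma newton_poly_comult_eval:
  "(\<Sum>(x,y)\<leftarrow>D a. poly (newton_poly D e \<nu> x) s * poly (newton_poly D e \<nu> y) t)
     = poly (newton_poly D e \<nu> a) (s + t)"
proof -
  let ?p = "conv_power D e \<nu>"
  have "finite (insert a (fst ` set (D a) \<union> snd ` set (D a)))" by simp
  from locally_nilpotent_common_bound[OF nil this] obtain N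
    where N: "\<forall>x\<in>insert a (fst ` set (D a) \<union> snd ` set (D a)). \<forall>n\<ge>N. ?p n x = 0" ..
  then have Na: "\<forall>n\<ge>N. ?p n a = 0" by simp
  have "(\<Sum>(x,y)\<leftarrow>D a. poly (newton_poly D e \<nu> x) s * poly (newton_poly D e \<nu> y) t)
      = (\<Sum>(x,y)\<leftarrow>D a. \<Sum>i<N. \<Sum>k<N. ?p i x * ?p k y * ((s gchoose i) * (t gchoose k)))"
  proof (rule arg_cong[where f = sum_list], rule map_cong[OF refl])
    fix p assume "p \<in> set (D a)"
    then have "\<forall>n\<ge>N. ?p n (fst p) = 0" "\<forall>n\<ge>N. ?p n (snd p) = 0"
      using N by auto
    from this[THEN poly_newton_poly]
    show "(\<lambda>(x,y). poly (newton_poly D e \<nu> x) s * poly (newton_poly D e \<nu> y) t) p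
        = (\<lambda>(x,y). \<Sum>i<N. \<Sum>k<N. ?p i x * ?p k y * ((s gchoose i) * (t gchoose k))) p"
      by (simp add: split_def sum_product algebra_simps)
  qed
  also have "\<dots> = (\<Sum>i<N. \<Sum>k<N. ?p (i + k) a * ((s gchoose i) * (t gchoose k)))"
    by (simp add: split_def sum_list_sum_swap sum_list_mult_const convolution_def
        conv_power_add[OF co lin])
  also have "\<dots> = poly (newton_poly D e \<nu> a) (s + t)"
    by (simp add: gbinomial_Vandermonde_truncated[OF Na] poly_newton_poly[OF Na])
  finally show ?thesis .
qed

lemma coalgebra_morphism_newton_poly:
  "coalgebra_morphism sc D e smult polyDelta polyeps (newton_poly D e \<nu>)"
proof -
  have "tensor_eq smult smult (map (\<lambda>(x,y). (newton_poly D e \<nu> x, newton_poly D e \<nu> y)) (D a))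
          (polyDelta (newton_poly D e \<nu> a))" for a
    using infinite_UNIV_char_0
    by (rule tensor_eq_polyI) (simp only: sum_list_map_pair newton_poly_comult_eval polyDelta_eval)
  then show ?thesis
    by (simp add: coalgebra_morphism_def linear_newton_poly newton_poly_counit)
qed

end

section \<open>Graded connected coalgebras\<close>

lemma graded_connected_degree_0_vanish:
  assumes gc: "graded_connected_coalgebra sc D e G"
    and f: "Vector_Spaces.linear sc (*) f"
    and u: "u \<in> G 0" "u \<noteq> 0" "f u = 0"
    and g: "g \<in> G 0"
  shows "f g = 0"
proof -
  obtain z where G0: "G 0 = module.span sc {z}"
    using gc by (auto simp: graded_connected_coalgebra_def)
  have md: "module sc"
    using gc by (simp add: graded_connected_coalgebra_def coalgebra_def module_iff_vector_space)
  then obtain c where c: "u = sc c z"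
    using u G0 by (auto simp: module.span_singleton)
  with md u(2) have "c \<noteq> 0" by (auto simp: module.scale_zero_left)
  with c u(3) have "f z = 0" by (simp add: linear_map_scale[OF f])
  moreover obtain k where "g = sc k z"
    using g G0 md by (auto simp: module.span_singleton)
  ultimately show ?thesis by (simp add: linear_map_scale[OF f])
qed

lemma graded_conv_power_vanish:
  assumes gc: "graded_connected_coalgebra sc D e G"
    and f: "Vector_Spaces.linear sc (*) f" and f0: "\<And>g. g \<in> G 0 \<Longrightarrow> f g = 0"
  shows "a \<in> G k \<Longrightarrow> k < n \<Longrightarrow> conv_power D e f n a = 0"
proof (induct n arbitrary: k a)
  case (Suc n)
  have co: "coalgebra sc D e" using gc by (simp add: graded_connected_coalgebra_def)
  obtain L where L: "tensor_eq sc sc (D a) L"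
    and deg: "\<forall>(x,y)\<in>set L. \<exists>i j. i + j = k \<and> x \<in> G i \<and> y \<in> G j"
    using gc Suc.prems(1) unfolding graded_connected_coalgebra_def by blast
  have vanish: "f x * conv_power D e f n y = 0" if xy: "(x, y) \<in> set L" for x y
  proof -
    obtain i j where "i + j = k" "x \<in> G i" "y \<in> G j" using deg xy by blast
    with Suc show ?thesis by (cases i) (auto simp: f0)
  qed
  have "(\<Sum>(x,y)\<leftarrow>L. f x * conv_power D e f n y) = 0"
    using vanish by (induct L) auto
  then show ?case
    using tensor_eqD[OF L f linear_conv_power[OF co f]] by (simp add: convolution_def)
qed simp

lemma graded_locally_nilpotent:
  assumes gc: "graded_connected_coalgebra sc D e G"
    and f: "Vector_Spaces.linear sc (*) f" and f0: "\<And>g. g \<in> G 0 \<Longrightarrow> f g = 0"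
  shows "locally_nilpotent D e f"
  unfolding locally_nilpotent_def
proof
  fix a
  have co: "coalgebra sc D e" using gc by (simp add: graded_connected_coalgebra_def)
  have "\<exists>!c. (\<forall>n. c n \<in> G n) \<and> finite {n. c n \<noteq> 0} \<and> a = (\<Sum>n\<in>{n. c n \<noteq> 0}. c n)"
    using gc by (simp add: graded_connected_coalgebra_def)
  then obtain c where c: "\<forall>n. c n \<in> G n" "finite {n. c n \<noteq> 0}"
    and a: "a = (\<Sum>n\<in>{n. c n \<noteq> 0}. c n)"
    by (auto dest: ex1_implies_ex)
  have "conv_power D e f n a = 0" if n: "Suc (Max (insert 0 {n. c n \<noteq> 0})) \<le> n" for n
  proof -
    have "conv_power D e f n (c k) = 0" if "c k \<noteq> 0" for k
    proof (rule graded_conv_power_vanish[OF gc f f0])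
      show "c k \<in> G k" using c(1) ..
      have "k \<le> Max (insert 0 {n. c n \<noteq> 0})" using c(2) \<open>c k \<noteq> 0\<close> by simp
      with n show "k < n" by simp
    qed
    then show ?thesis
      by (simp add: a linear_map_sum[OF linear_conv_power[OF co f]])
  qed
  then show "\<exists>N. \<forall>n\<ge>N. conv_power D e f n a = 0" by blast
qed

section \<open>Bialgebras and cointeraction\<close>

lemma bialgebra_counit_character:
  "bialgebra sc m one D e \<Longrightarrow> character sc m one e"
  by (simp add: bialgebra_def character_def algebra_morphism_def coalgebra_def)

lemma character_convolution:
  assumes bi: "bialgebra sc m one D e"
    and f: "character sc m one f" and g: "character sc m one g"
  shows "character sc m one (convolution D f g)"
proof -
  have co: "coalgebra sc D e" using bi by (simp add: bialgebra_def)
  have f_lin: "Vector_Spaces.linear sc (*) f" and f_mult: "\<And>a b. f (m a b) = f a * f b"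
    and f_one: "f one = 1"
    using f by (simp_all add: character_def algebra_morphism_def)
  have g_lin: "Vector_Spaces.linear sc (*) g" and g_mult: "\<And>a b. g (m a b) = g a * g b"
    and g_one: "g one = 1"
    using g by (simp_all add: character_def algebra_morphism_def)
  have "convolution D f g (m a b) = convolution D f g a * convolution D f g b" for a b
  proof -
    have "tensor_eq sc sc (D (m a b))
            (concat (map (\<lambda>(x,y). map (\<lambda>(x',y'). (m x x', m y y')) (D b)) (D a)))"
      using bi by (simp add: bialgebra_def)
    from tensor_eqD[OF this f_lin g_lin] show ?thesis
      by (simp add: convolution_def map_concat sum_list_concat o_def split_def f_mult g_mult
          sum_list_times_sum_list algebra_simps)
  qed
  moreover have "convolution D f g one = 1"
  proof -
    have "tensor_eq sc sc (D one) [(one, one)]" using bi by (simp add: bialgebra_def)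
    from tensor_eqD[OF this f_lin g_lin] show ?thesis
      by (simp add: convolution_def f_one g_one)
  qed
  ultimately show ?thesis
    using linear_convolution[OF co f_lin g_lin] by (simp add: character_def algebra_morphism_def)
qed

lemma character_conv_power:
  "bialgebra sc m one D e \<Longrightarrow> character sc m one f \<Longrightarrow> character sc m one (conv_power D e f n)"
  by (induct n) (simp_all add: bialgebra_counit_character character_convolution)

lemma bialgebra_morphism_to_poly_iff_character:
  fixes sc :: "'k::field_char_0 \<Rightarrow> 'a::ab_group_add \<Rightarrow> 'a"
  assumes mor: "coalgebra_morphism sc D e smult polyDelta polyeps \<psi>" and ev: "polyeps' \<circ> \<psi> = lam"
    and bi: "bialgebra sc m one D e"
  shows "bialgebra_morphism sc m one D e smult (*) 1 polyDelta polyeps \<psi> \<longleftrightarrow> character sc m one lam"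
proof
  assume "bialgebra_morphism sc m one D e smult (*) 1 polyDelta polyeps \<psi>"
  then have "algebra_morphism m one (*) 1 ((\<lambda>p. poly p 1) \<circ> \<psi>)"
    by (simp add: bialgebra_morphism_def algebra_morphism_def)
  then show "character sc m one lam"
    using ev coalgebra_morphism_linear_eval[OF mor ev]
    by (simp add: character_def polyeps'_def comp_def)
next
  assume "character sc m one lam"
  then have "character sc m one (conv_power D e lam n)" for n
    by (rule character_conv_power[OF bi])
  then have "algebra_morphism m one (*) 1 \<psi>"
    by (auto simp: algebra_morphism_def character_def intro!: poly_eqI_of_nat
        simp: coalgebra_morphism_poly_of_nat[OF mor ev])
  with mor show "bialgebra_morphism sc m one D e smult (*) 1 polyDelta polyeps \<psi>"
    by (simp add: bialgebra_morphism_def)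
qed

lemma convolution_cointeraction:
  assumes ci: "cointeraction sc m one D e d e'"
    and f: "Vector_Spaces.linear sc (*) f" and g: "Vector_Spaces.linear sc (*) g"
    and h: "Vector_Spaces.linear sc (*) h" and h_mult: "\<And>x y. h (m x y) = h x * h y"
  shows "convolution d (convolution D f g) h = convolution D (convolution d f h) (convolution d g h)"
proof
  fix a
  let ?L = "concat (map (\<lambda>(x,y). map (\<lambda>(u,v). (u,v,y)) (D x)) (d a))"
    and ?R = "concat (map (\<lambda>(x,y). concat (map (\<lambda>(x1,x2). map (\<lambda>(y1,y2). (x1, y1, m x2 y2))
                (d y)) (d x))) (D a))"
  have "convolution d (convolution D f g) h a = (\<Sum>(x,y,z)\<leftarrow>?L. f x * g y * h z)"
    by (simp add: convolution_def map_concat sum_list_concat o_def split_def sum_list_mult_const)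
  also have "\<dots> = (\<Sum>(x,y,z)\<leftarrow>?R. f x * g y * h z)"
    using ci tensor3_eqD[OF _ f g h] by (simp add: cointeraction_def)
  also have "\<dots> = convolution D (convolution d f h) (convolution d g h) a"
    by (simp add: convolution_def map_concat sum_list_concat o_def split_def h_mult
        sum_list_times_sum_list algebra_simps)
  finally show "convolution d (convolution D f g) h a
      = convolution D (convolution d f h) (convolution d g h) a" .
qed

text \<open>The exponents are positive because \<open>\<lambda>\<^sup>*\<^sup>0 = e\<close> is not the counit of \<open>d\<close>.\<close>
lemma cointeraction_conv_power_mult:
  assumes ci: "cointeraction sc m one D e d e'"
  shows "convolution d (conv_power D e e' (Suc k)) (conv_power D e e' (Suc l))
       = conv_power D e e' (Suc k * Suc l)"
proof -
  have bD: "bialgebra sc m one D e" and bd: "bialgebra sc m one d e'"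
    using ci by (simp_all add: cointeraction_def)
  have coD: "coalgebra sc D e" and cod: "coalgebra sc d e'"
    using bD bd by (simp_all add: bialgebra_def)
  have e': "character sc m one e'" by (rule bialgebra_counit_character[OF bd])
  then have e'_lin: "Vector_Spaces.linear sc (*) e'" by (simp add: character_def)
  let ?h = "conv_power D e e' (Suc l)"
  have "character sc m one ?h" by (rule character_conv_power[OF bD e'])
  then have h_lin: "Vector_Spaces.linear sc (*) ?h" and h_mult: "\<And>x y. ?h (m x y) = ?h x * ?h y"
    by (simp_all add: character_def algebra_morphism_def)
  have e'_h: "convolution d e' ?h = ?h" by (rule convolution_counit_left[OF cod h_lin])
  show ?thesis
  proof (induct k)
    case 0
    show ?case using e'_h by (simp only: conv_power_1[OF coD e'_lin] One_nat_def[symmetric] mult_1)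
  next
    case (Suc k)
    have "convolution d (conv_power D e e' (Suc (Suc k))) ?h
        = convolution D (convolution d e' ?h) (convolution d (conv_power D e e' (Suc k)) ?h)"
      unfolding conv_power.simps(2)[of D e e' "Suc k"]
      by (rule convolution_cointeraction[OF ci e'_lin linear_conv_power[OF coD e'_lin] h_lin h_mult])
    also have "\<dots> = conv_power D e e' (Suc l + Suc k * Suc l)"
      by (simp only: e'_h Suc conv_power_add[OF coD e'_lin])
    also have "Suc l + Suc k * Suc l = Suc (Suc k) * Suc l" by simp
    finally show ?case .
  qed
qed

lemma coalgebra_morphism_polydelta:
  fixes sc :: "'k::field_char_0 \<Rightarrow> 'a::ab_group_add \<Rightarrow> 'a"
  assumes mor: "coalgebra_morphism sc D e smult polyDelta polyeps \<psi>" and ev: "polyeps' \<circ> \<psi> = e'"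
    and ci: "cointeraction sc m one D e d e'"
  shows "coalgebra_morphism sc d e' smult polydelta polyeps' \<psi>"
proof -
  have "tensor_eq smult smult (map (\<lambda>(x,y). (\<psi> x, \<psi> y)) (d a)) (polydelta (\<psi> a))" for a
  proof (rule tensor_eq_polyI)
    show "infinite (range (\<lambda>n. of_nat (Suc n) :: 'k))"
      by (intro range_inj_infinite injI) simp
  next
    fix s t assume "s \<in> range (\<lambda>n. of_nat (Suc n) :: 'k)" "t \<in> range (\<lambda>n. of_nat (Suc n) :: 'k)"
    then obtain i j where s: "s = of_nat (Suc i)" and t: "t = of_nat (Suc j)" by blast
    have "(\<Sum>(x,y)\<leftarrow>d a. poly (\<psi> x) s * poly (\<psi> y) t)
        = convolution d (conv_power D e e' (Suc i)) (conv_power D e e' (Suc j)) a"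
      by (simp only: s t coalgebra_morphism_poly_of_nat[OF mor ev] convolution_def)
    also have "\<dots> = poly (\<psi> a) (s * t)"
      by (simp only: s t cointeraction_conv_power_mult[OF ci] of_nat_mult
          coalgebra_morphism_poly_of_nat[OF mor ev, symmetric])
    finally show "(\<Sum>(x,y)\<leftarrow>map (\<lambda>(x,y). (\<psi> x, \<psi> y)) (d a). poly x s * poly y t)
        = (\<Sum>(x,y)\<leftarrow>polydelta (\<psi> a). poly x s * poly y t)"
      by (simp only: sum_list_map_pair polydelta_eval)
  qed
  with mor ev show ?thesis
    by (simp add: coalgebra_morphism_def fun_eq_iff)
qed

lemma bialgebra_morphisms_to_poly_iff_counit:
  fixes sc :: "'k::field_char_0 \<Rightarrow> 'a::ab_group_add \<Rightarrow> 'a"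
  assumes mor: "coalgebra_morphism sc D e smult polyDelta polyeps \<psi>" and ev: "polyeps' \<circ> \<psi> = lam"
    and ci: "cointeraction sc m one D e d e'"
  shows "(bialgebra_morphism sc m one D e smult (*) 1 polyDelta polyeps \<psi> \<and>
          bialgebra_morphism sc m one d e' smult (*) 1 polydelta polyeps' \<psi>) \<longleftrightarrow> lam = e'"
proof
  assume "bialgebra_morphism sc m one D e smult (*) 1 polyDelta polyeps \<psi> \<and>
          bialgebra_morphism sc m one d e' smult (*) 1 polydelta polyeps' \<psi>"
  then have "polyeps' \<circ> \<psi> = e'"
    by (auto simp: bialgebra_morphism_def coalgebra_morphism_def)
  with ev show "lam = e'" by simp
next
  assume "lam = e'"
  with ev have ev': "polyeps' \<circ> \<psi> = e'" by simp
  have bD: "bialgebra sc m one D e" and bd: "bialgebra sc m one d e'"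
    using ci by (simp_all add: cointeraction_def)
  have "bialgebra_morphism sc m one D e smult (*) 1 polyDelta polyeps \<psi>"
    using bialgebra_morphism_to_poly_iff_character[OF mor ev' bD] bialgebra_counit_character[OF bd]
    by simp
  with coalgebra_morphism_polydelta[OF mor ev' ci]
  show "bialgebra_morphism sc m one D e smult (*) 1 polyDelta polyeps \<psi> \<and>
          bialgebra_morphism sc m one d e' smult (*) 1 polydelta polyeps' \<psi>"
    by (simp add: bialgebra_morphism_def)
qed

theorem proposition64:
  fixes sc :: "'k::field_char_0 \<Rightarrow> 'a::ab_group_add \<Rightarrow> 'a"
    and D :: "'a \<Rightarrow> ('a \<times> 'a) list" and e :: "'a \<Rightarrow> 'k"
    and G :: "nat \<Rightarrow> 'a set" and u :: 'a and lam :: "'a \<Rightarrow> 'k"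
  assumes gc: "graded_connected_coalgebra sc D e G"
    and u0: "u \<in> G 0" and eu: "e u = 1"
    and lin: "Vector_Spaces.linear sc (*) lam" and lu: "lam u = 1"
  shows "(\<exists>!\<psi>. coalgebra_morphism sc D e smult polyDelta polyeps \<psi> \<and> polyeps' \<circ> \<psi> = lam)
    \<and> (\<forall>\<psi> m one. coalgebra_morphism sc D e smult polyDelta polyeps \<psi> \<and> polyeps' \<circ> \<psi> = lam
           \<longrightarrow> bialgebra sc m one D e
           \<longrightarrow> (bialgebra_morphism sc m one D e smult (*) 1 polyDelta polyeps \<psi>
                \<longleftrightarrow> character sc m one lam))
    \<and> (\<forall>\<psi> m one d e'. coalgebra_morphism sc D e smult polyDelta polyeps \<psi> \<and> polyeps' \<circ> \<psi> = lam
           \<longrightarrow> cointeraction sc m one D e d e'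
           \<longrightarrow> ((bialgebra_morphism sc m one D e smult (*) 1 polyDelta polyeps \<psi> \<and>
                 bialgebra_morphism sc m one d e' smult (*) 1 polydelta polyeps' \<psi>)
                \<longleftrightarrow> lam = e'))"
proof (intro conjI allI impI)
  have co: "coalgebra sc D e" using gc by (simp add: graded_connected_coalgebra_def)
  define \<nu> where "\<nu> a = lam a - e a" for a
  have \<nu>_lin: "Vector_Spaces.linear sc (*) \<nu>"
    unfolding \<nu>_def by (rule linear_form_diff[OF lin coalgebra_linear_counit[OF co]])
  have "u \<noteq> 0" using eu linear_map_zero[OF coalgebra_linear_counit[OF co]] by auto
  then have "\<nu> g = 0" if "g \<in> G 0" for g
    using graded_connected_degree_0_vanish[OF gc \<nu>_lin u0 _ _ that] by (simp add: \<nu>_def eu lu)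
  then have nil: "locally_nilpotent D e \<nu>" by (rule graded_locally_nilpotent[OF gc \<nu>_lin])
  have "coalgebra_morphism sc D e smult polyDelta polyeps (newton_poly D e \<nu>)"
    and "polyeps' \<circ> newton_poly D e \<nu> = lam"
    by (simp_all add: coalgebra_morphism_newton_poly[OF co \<nu>_lin nil] newton_poly_eval_1[OF co \<nu>_lin nil]
        \<nu>_def fun_eq_iff)
  then show "\<exists>!\<psi>. coalgebra_morphism sc D e smult polyDelta polyeps \<psi> \<and> polyeps' \<circ> \<psi> = lam"
    using coalgebra_morphism_to_poly_unique by blast
qed (simp_all add: bialgebra_morphism_to_poly_iff_character bialgebra_morphisms_to_poly_iff_counit)

end
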